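(* The mould $\mathsf{dupal}$, defined by $\mathsf{dupal}^0=0$ and, for $m\ge1$, \[ \mathsf{dupal}^m(x_1,\dots,x_m)=\frac{B_m}{m!}\frac{1}{x_1\cdots x_m}\sum_{k=0}^{m-1}(-1)^k\binom{m-1}{k}x_{k+1}, \] is alternal.
   Context: $B_m$ are the Bernoulli numbers, $\frac{x}{e^x-1}=\sum_{m\ge0}\frac{B_m}{m!}x^m$. A mould is a family $A=(A^m(x_1,\dots,x_m))_{m\ge0}$ with $A^m\in\mathbb{Q}((x_1,\dots,x_m))$, extended linearly to formal linear combinations of words. Shuffle product: $\emptyset\,\text{ш}\,\omega=\omega\,\text{ш}\,\emptyset=\omega$, $a\omega\,\text{ш}\,b\eta=a(\omega\,\text{ш}\,b\eta)+b(a\omega\,\text{ш}\,\eta)$. A mould $A$ with $A^0=0$ is alternal if $A^{p+q}\bigl((x_1,\dots,x_p)\,\text{ш}\,(x_{p+1},\dots,x_{p+q})\bigr)=0$ for all $p,q\ge1$. *)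

theory Defs
  imports "HOL-Computational_Algebra.Formal_Power_Series"
begin

definition bernoulli :: "nat \<Rightarrow> rat" where
  "bernoulli m = fact m * fps_nth (fps_X / (fps_exp 1 - 1)) m"

fun shuffle :: "'a list \<Rightarrow> 'a list \<Rightarrow> 'a list list" where
  "shuffle [] ys = [ys]"
| "shuffle xs [] = [xs]"
| "shuffle (a # xs) (b # ys) =
     map ((#) a) (shuffle xs (b # ys)) @ map ((#) b) (shuffle (a # xs) ys)"

text \<open>A mould is represented by its evaluation: a word (x_1,...,x_m) of values is sent to
  A^m(x_1,...,x_m). Alternality: A^0 = 0 and A vanishes on every shuffle of two nonempty
  words, at all points where the components are defined (all variables nonzero).\<close>
definition alternal :: "(rat list \<Rightarrow> rat) \<Rightarrow> bool" where
  "alternal A \<longleftrightarrow> A [] = 0 \<and>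
     (\<forall>xs ys. xs \<noteq> [] \<longrightarrow> ys \<noteq> [] \<longrightarrow> (\<forall>x \<in> set (xs @ ys). x \<noteq> 0) \<longrightarrow>
        sum_list (map A (shuffle xs ys)) = 0)"

definition dupal :: "rat list \<Rightarrow> rat" where
  "dupal xs = (let m = length xs in
     if m = 0 then 0
     else bernoulli m / fact m * (1 / prod_list xs) *
          (\<Sum>k = 0..m-1. (-1) ^ k * of_nat ((m - 1) choose k) * xs ! k))"

end

theory Submission
  imports Defs
begin

text \<open>On every shuffle w of xs and ys, of total length m, the prefactor of dupal w depends only
  on the multiset of letters, so the shuffle sum of dupal is that prefactor times the shuffle sum
  of the linear form L n w = sum_k (-1)^k C(n,k) w_k at n = m - 1. Since
  L (n+1) (x w) = L n (x w) - L n w, Pascal's rule gives by induction on n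
    sum_w L n w = C(m-1-n, |ys|) L n xs + C(m-1-n, |xs|) L n ys,
  and for n = m - 1 both binomial coefficients are C(0, positive) = 0.\<close>

definition binomial_difference :: "nat \<Rightarrow> 'a::comm_ring_1 list \<Rightarrow> 'a" where
  "binomial_difference n w = (\<Sum>k<length w. (-1) ^ k * of_nat (n choose k) * w ! k)"

lemma binomial_difference_Nil [simp]: "binomial_difference n [] = 0"
  by (simp add: binomial_difference_def)

lemma binomial_difference_Cons:
  "binomial_difference n (x # w) =
     x + (\<Sum>k<length w. (-1) ^ Suc k * of_nat (n choose Suc k) * w ! k)"
  unfolding binomial_difference_def
  by (simp only: length_Cons sum.lessThan_Suc_shift) (simp del: binomial_Suc_Suc)

lemma binomial_difference_0_Cons [simp]: "binomial_difference 0 (x # w) = x"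
  by (simp add: binomial_difference_Cons)

lemma binomial_difference_Suc_Cons:
  "binomial_difference (Suc n) (x # w) = binomial_difference n (x # w) - binomial_difference n w"
  unfolding binomial_difference_Cons
  by (simp add: binomial_difference_def sum_subtractf[symmetric] sum.distrib[symmetric]
      algebra_simps)

lemma shuffle_Nil2 [simp]: "shuffle xs [] = [xs]"
  by (cases xs) simp_all

lemma length_shuffle: "length (shuffle xs ys) = (length xs + length ys) choose length xs"
  by (induction xs ys rule: shuffle.induct) auto

lemma mset_shuffle: "w \<in> set (shuffle xs ys) \<Longrightarrow> mset w = mset xs + mset ys"
  by (induction xs ys arbitrary: w rule: shuffle.induct) auto

lemma sum_shuffle_binomial_difference_Suc:
  "(\<Sum>w\<leftarrow>shuffle (x # xs) (y # ys). binomial_difference (Suc n) w) =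
     (\<Sum>w\<leftarrow>shuffle (x # xs) (y # ys). binomial_difference n w)
     - (\<Sum>w\<leftarrow>shuffle xs (y # ys). binomial_difference n w)
     - (\<Sum>w\<leftarrow>shuffle (x # xs) ys. binomial_difference n w)"
  by (simp add: comp_def binomial_difference_Suc_Cons sum_list_subtractf)

lemma sum_shuffle_binomial_difference:
  fixes xs ys :: "'a::comm_ring_1 list"
  assumes "n < length xs + length ys"
  shows "(\<Sum>w\<leftarrow>shuffle xs ys. binomial_difference n w) =
    of_nat ((length xs + length ys - 1 - n) choose length ys) * binomial_difference n xs +
    of_nat ((length xs + length ys - 1 - n) choose length xs) * binomial_difference n ys"
  using assms
proof (induction n arbitrary: xs ys)
  case 0
  then show ?case
  proof (cases "(xs, ys)" rule: shuffle.cases)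
    case (3 x xs' y ys')
    then show ?thesis
      using binomial_symmetric[of "length xs'" "Suc (length xs' + length ys')"]
      by (simp add: comp_def sum_list_triv length_shuffle del: binomial_Suc_Suc)
  qed simp_all
next
  case (Suc n)
  then show ?case
  proof (cases "(xs, ys)" rule: shuffle.cases)
    case (3 x xs' y ys')
    define t where "t = length xs' + length ys' - n"
    have "n \<le> length xs' + length ys'"
      using Suc.prems 3 by simp
    then have "(\<Sum>w\<leftarrow>shuffle xs ys. binomial_difference (Suc n) w) =
        of_nat (Suc t choose Suc (length ys')) * binomial_difference n (x # xs')
      + of_nat (Suc t choose Suc (length xs')) * binomial_difference n (y # ys')
      - of_nat (t choose Suc (length ys')) * binomial_difference n xs'
      - of_nat (t choose length xs') * binomial_difference n (y # ys')
      - of_nat (t choose length ys') * binomial_difference n (x # xs')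
      - of_nat (t choose Suc (length xs')) * binomial_difference n ys'"
      using Suc.IH[of "x # xs'" "y # ys'"] Suc.IH[of xs' "y # ys'"] Suc.IH[of "x # xs'" ys'] 3
      by (simp add: sum_shuffle_binomial_difference_Suc t_def Suc_diff_le
          del: binomial_Suc_Suc shuffle.simps)
    also have "\<dots> =
        of_nat (t choose Suc (length ys')) * binomial_difference (Suc n) (x # xs')
      + of_nat (t choose Suc (length xs')) * binomial_difference (Suc n) (y # ys')"
      unfolding binomial_difference_Suc_Cons binomial_Suc_Suc by (simp add: algebra_simps)
    finally show ?thesis
      using 3 unfolding t_def by (simp del: binomial_Suc_Suc)
  qed simp_all
qed

lemma sum_shuffle_binomial_difference_top:
  assumes "xs \<noteq> []" "ys \<noteq> []"
  shows "(\<Sum>w\<leftarrow>shuffle xs ys. binomial_difference (length xs + length ys - 1) w) = 0"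
  using assms sum_shuffle_binomial_difference[of "length xs + length ys - 1" xs ys]
  by (cases xs; cases ys) simp_all

lemma dupal_eq_binomial_difference:
  "w \<noteq> [] \<Longrightarrow> dupal w =
     bernoulli (length w) / fact (length w) / prod_list w * binomial_difference (length w - 1) w"
  unfolding dupal_def binomial_difference_def Let_def
  by (simp add: atLeast0AtMost lessThan_Suc_atMost[symmetric])

theorem proposition1p30:
  shows "alternal dupal"
  unfolding alternal_def
proof (intro conjI allI impI)
  show "dupal [] = 0"
    by (simp add: dupal_def)
next
  fix xs ys :: "rat list"
  assume "xs \<noteq> []" "ys \<noteq> []"
  define m where "m = length xs + length ys"
  define c where "c = bernoulli m / fact m / prod_list (xs @ ys)"
  have "dupal w = c * binomial_difference (m - 1) w" if "w \<in> set (shuffle xs ys)" for w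
  proof -
    have "mset w = mset (xs @ ys)"
      using mset_shuffle[OF that] by simp
    then have "length w = m" "prod_list w = prod_list (xs @ ys)"
      unfolding m_def by (metis length_append size_mset, metis prod_mset_prod_list)
    moreover have "w \<noteq> []"
      using \<open>length w = m\<close> \<open>xs \<noteq> []\<close> unfolding m_def by auto
    ultimately show ?thesis
      using dupal_eq_binomial_difference[of w] unfolding c_def m_def by auto
  qed
  then have "(\<Sum>w\<leftarrow>shuffle xs ys. dupal w) = c * (\<Sum>w\<leftarrow>shuffle xs ys. binomial_difference (m - 1) w)"
    by (simp add: sum_list_const_mult cong: map_cong)
  also have "\<dots> = 0"
    using sum_shuffle_binomial_difference_top[OF \<open>xs \<noteq> []\<close> \<open>ys \<noteq> []\<close>] unfolding m_def by simp
  finally show "sum_list (map dupal (shuffle xs ys)) = 0"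
    by simp
qed

end
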